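(* Let $Q:(-\infty,-1)\to(-\infty,0)$ be the inverse of the strictly increasing function $G\mapsto G-e^G$ on $(-\infty,0)$, and define $R:\mathbb{R}\to\mathbb{R}$ by $R(V)=-2(1-e^{Q(V)})^2$ for $V<-1$ and $R(V)=4(V+1)$ for $V\ge -1$. Fix $m<-1$. For $n\in\mathbb{R}$ let $V(t;n)$ denote the unique solution of $V''+3V'=R(V)$, $t>0$, $V(0)=m$, $V'(0)=n$ (prime denoting $d/dt$, $V_t=dV/dt$). Define $\beta^-=\{n\in\mathbb{R}: \text{there exists } t>0 \text{ with } V_t(t;n)<0\}$ and $\beta^+=\{n\in\mathbb{R}: V_t(t;n)>0 \text{ for all } t\ge 0 \text{ and } V(t;n)>-1 \text{ for some } t>0\}$. Then $\beta^+$ and $\beta^-$ are both open and nonempty subsets of $\mathbb{R}$. *)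

theory Defs
  imports Complex_Main
begin

definition Q :: "real \<Rightarrow> real" where
  "Q V = (THE G. G < 0 \<and> G - exp G = V)"

definition R :: "real \<Rightarrow> real" where
  "R V = (if V < -1 then -2 * (1 - exp (Q V))^2 else 4 * (V + 1))"

definition is_sol :: "real \<Rightarrow> real \<Rightarrow> (real \<Rightarrow> real) \<Rightarrow> (real \<Rightarrow> real) \<Rightarrow> bool" where
  "is_sol m n f f' \<longleftrightarrow>
     f 0 = m \<and> f' 0 = n \<and>
     (\<forall>t\<ge>0. (f has_real_derivative f' t) (at t within {0..})) \<and>
     continuous_on {0..} f' \<and>
     (\<forall>t>0. (f' has_real_derivative (R (f t) - 3 * f' t)) (at t))"

definition solpair :: "real \<Rightarrow> real \<Rightarrow> (real \<Rightarrow> real) \<times> (real \<Rightarrow> real)" where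
  "solpair m n = (SOME p. is_sol m n (fst p) (snd p))"

definition Vsol :: "real \<Rightarrow> real \<Rightarrow> real \<Rightarrow> real" where
  "Vsol m n t = fst (solpair m n) t"

definition Vt :: "real \<Rightarrow> real \<Rightarrow> real \<Rightarrow> real" where
  "Vt m n t = snd (solpair m n) t"

definition beta_minus :: "real \<Rightarrow> real set" where
  "beta_minus m = {n. \<exists>t>0. Vt m n t < 0}"

definition beta_plus :: "real \<Rightarrow> real set" where
  "beta_plus m = {n. (\<forall>t\<ge>0. Vt m n t > 0) \<and> (\<exists>t>0. Vsol m n t > -1)}"

end

theory Submission
  imports Defs "HOL-Analysis.Analysis"
begin

text \<open>
  With \<open>G = Q V\<close> one has \<open>V = G - exp G\<close> and \<open>R V = -2 (1 - exp G)\<^sup>2\<close>, so \<open>dR/dV = 4 exp G\<close>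
  lies in \<open>(0, 4)\<close> for \<open>V < -1\<close>: \<open>R\<close> is nondecreasing and 4-Lipschitz, \<open>R \<ge> -2\<close>, and \<open>R > 0\<close>
  on \<open>(-1, \<infinity>)\<close>. For a Lipschitz nonlinearity the initial value problem is well posed: a solution
  is a fixed point of the variation-of-constants operator, which is a contraction in a
  Bielecki-weighted sup norm, and the energy \<open>(V\<^sub>1 - V\<^sub>2)\<^sup>2 + (V\<^sub>1' - V\<^sub>2')\<^sup>2\<close> grows at most
  exponentially, so \<open>V(t; n)\<close> and \<open>V\<^sub>t(t; n)\<close> depend continuously on \<open>n\<close>, uniformly for
  bounded \<open>t\<close>.

  Hence \<open>V\<^sub>t(t; n) < 0\<close> persists under small changes of \<open>n\<close>, and so do \<open>V\<^sub>t > 0\<close> on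
  \<open>[0, t\<^sub>1]\<close> and \<open>V(t\<^sub>1) > -1\<close>. After such a time \<open>V\<^sub>t\<close> cannot vanish, since at a first zero
  \<open>V'' = R V > 0\<close>; this makes both sets open. Every \<open>n < 0\<close> lies in \<open>\<beta>\<^sup>-\<close> by continuity of
  \<open>V\<^sub>t\<close> at \<open>0\<close>, and every large \<open>n\<close> lies in \<open>\<beta>\<^sup>+\<close> by the lower bounds on \<open>V\<close> and \<open>V\<^sub>t\<close>
  that follow from \<open>R \<ge> -2\<close>.
\<close>

section \<open>The nonlinearity \<open>R\<close>\<close>

lemma strict_mono_on_minus_exp: "strict_mono_on {..0} (\<lambda>x::real. x - exp x)"
proof (rule strict_mono_onI)
  fix h g :: real assume "h \<in> {..0}" "g \<in> {..0}" "h < g"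
  then show "h - exp h < g - exp g"
    by (intro DERIV_pos_imp_increasing_open[of h g "\<lambda>x. x - exp x"])
       (auto intro!: exI derivative_eq_intros continuous_intros)
qed

lemma Q_inverse:
  assumes "V < -1"
  shows "Q V < 0" "Q V - exp (Q V) = V"
proof -
  have "\<exists>G. V \<le> G \<and> G \<le> 0 \<and> G - exp G = V"
    by (rule IVT'[where f="\<lambda>x. x - exp x"]) (use assms in \<open>auto intro!: continuous_intros\<close>)
  then obtain G where G: "G \<le> 0" "G - exp G = V" by blast
  have "G \<noteq> 0" using G(2) assms by auto
  with G have G': "G < 0 \<and> G - exp G = V" by simp
  have "Q V = G" unfolding Q_def
  proof (rule the_equality)
    show "G < 0 \<and> G - exp G = V" by (fact G')
  next
    fix H assume "H < 0 \<and> H - exp H = V"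
    then show "H = G"
      using strict_mono_on_eqD[OF strict_mono_on_minus_exp, of G H] G by simp
  qed
  with G' show "Q V < 0" "Q V - exp (Q V) = V" by simp_all
qed

lemma Q_mono:
  assumes "b \<le> a" "a < -1"
  shows "Q b \<le> Q a"
  using Q_inverse[of a] Q_inverse[of b] assms
    strict_mono_on_less_eq[OF strict_mono_on_minus_exp, of "Q b" "Q a"] by auto

text \<open>In terms of \<open>G = Q V\<close>: \<open>R V = 4 V - 2 k G\<close> with the nondecreasing
  \<open>k G = (1 - exp G)\<^sup>2 + 2 (G - exp G)\<close>, which bounds the increments of \<open>R\<close> from above, while
  \<open>R V = -2 (1 - exp G)\<^sup>2\<close> is nondecreasing in \<open>G \<le> 0\<close>.\<close>

lemma mono_one_minus_exp_sq_plus: "mono (\<lambda>x::real. (1 - exp x)\<^sup>2 + 2 * (x - exp x))"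
proof (rule monoI)
  fix x y :: real
  assume "x \<le> y"
  then show "(1 - exp x)\<^sup>2 + 2 * (x - exp x) \<le> (1 - exp y)\<^sup>2 + 2 * (y - exp y)"
  proof (rule DERIV_nonneg_imp_nondecreasing)
    fix t :: real
    have "((\<lambda>x. (1 - exp x)\<^sup>2 + 2 * (x - exp x)) has_real_derivative 2 * (1 - exp t)\<^sup>2) (at t)"
      by (auto intro!: derivative_eq_intros simp: algebra_simps power2_eq_square)
    then show "\<exists>d. ((\<lambda>x. (1 - exp x)\<^sup>2 + 2 * (x - exp x)) has_real_derivative d) (at t) \<and> 0 \<le> d"
      by fastforce
  qed
qed

lemma R_increment_bounds:
  assumes "b \<le> a"
  shows "0 \<le> R a - R b \<and> R a - R b \<le> 4 * (a - b)"
proof (cases "a < -1")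
  case True
  with assms have b: "b < -1" by simp
  define ga gb where "ga = Q a" and "gb = Q b"
  have g: "ga < 0" "gb < 0" "ga - exp ga = a" "gb - exp gb = b"
    using Q_inverse[OF True] Q_inverse[OF b] by (simp_all add: ga_def gb_def)
  have "gb \<le> ga" unfolding ga_def gb_def by (rule Q_mono[OF assms True])
  then have "(1 - exp ga)\<^sup>2 \<le> (1 - exp gb)\<^sup>2"
    using g by (intro power_mono) auto
  moreover have "(1 - exp gb)\<^sup>2 + 2 * (gb - exp gb) \<le> (1 - exp ga)\<^sup>2 + 2 * (ga - exp ga)"
    using monoD[OF mono_one_minus_exp_sq_plus \<open>gb \<le> ga\<close>] .
  moreover have "R a - R b = 2 * ((1 - exp gb)\<^sup>2 - (1 - exp ga)\<^sup>2)"
    using True b by (simp add: R_def ga_def gb_def)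
  ultimately show ?thesis using g by (smt (verit))
next
  case False
  show ?thesis
  proof (cases "b < -1")
    case True
    define gb where "gb = Q b"
    have g: "gb < 0" "gb - exp gb = b"
      using Q_inverse[OF True] by (simp_all add: gb_def)
    have "(1 - exp gb)\<^sup>2 + 2 * b \<le> -2"
      using monoD[OF mono_one_minus_exp_sq_plus, of gb 0] g by simp
    moreover have "R a - R b = 4 * (a + 1) + 2 * (1 - exp gb)\<^sup>2"
      using True False by (simp add: R_def gb_def)
    ultimately show ?thesis using False g by (smt (verit) zero_le_power2)
  next
    case False
    then show ?thesis using \<open>\<not> a < -1\<close> assms by (simp add: R_def)
  qed
qed

lemma R_lipschitz: "4-lipschitz_on UNIV R"
proof (rule lipschitz_onI)
  fix a b :: real
  show "dist (R a) (R b) \<le> 4 * dist a b"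
    using R_increment_bounds[of a b] R_increment_bounds[of b a]
    by (cases "b \<le> a") (simp_all add: dist_real_def abs_le_iff)
qed simp

lemma R_ge: "-2 \<le> R v"
proof (cases "v < -1")
  case True
  then have "0 < exp (Q v)" "exp (Q v) < 1" using Q_inverse(1) by auto
  then have "(1 - exp (Q v))\<^sup>2 \<le> 1" by (intro power_le_one) auto
  with True show ?thesis by (simp add: R_def)
qed (simp add: R_def)

lemma R_pos: "-1 < v \<Longrightarrow> 0 < R v"
  by (simp add: R_def)

section \<open>Damped equations with a Lipschitz nonlinearity\<close>

definition damped_sol :: "(real \<Rightarrow> real) \<Rightarrow> real \<Rightarrow> real \<Rightarrow> (real \<Rightarrow> real) \<Rightarrow> (real \<Rightarrow> real) \<Rightarrow> bool" where
  "damped_sol F m n f f' \<longleftrightarrow>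
     f 0 = m \<and> f' 0 = n \<and>
     (\<forall>t\<ge>0. (f has_real_derivative f' t) (at t within {0..})) \<and>
     continuous_on {0..} f' \<and>
     (\<forall>t>0. (f' has_real_derivative (F (f t) - 3 * f' t)) (at t))"

lemma is_sol_iff_damped_sol: "is_sol m n f f' \<longleftrightarrow> damped_sol R m n f f'"
  by (simp add: is_sol_def damped_sol_def)

lemma damped_sol_continuous_on:
  "damped_sol F m n f f' \<Longrightarrow> continuous_on {0..} f"
  unfolding damped_sol_def by (intro DERIV_continuous_on) auto

lemma damped_sol_has_derivative:
  assumes "damped_sol F m n f f'" "0 < t"
  shows "(f has_real_derivative f' t) (at t)"
proof -
  have "at t within {0..} = at t"
    using assms(2) by (intro at_within_interior) auto
  with assms show ?thesis unfolding damped_sol_def by (metis less_imp_le)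
qed

lemma damped_sol_deriv_has_derivative:
  "damped_sol F m n f f' \<Longrightarrow> 0 < t \<Longrightarrow> (f' has_real_derivative (F (f t) - 3 * f' t)) (at t)"
  unfolding damped_sol_def by blast

lemma damped_sol_deriv_continuous_on:
  "damped_sol F m n f f' \<Longrightarrow> continuous_on {0..} f'"
  unfolding damped_sol_def by blast

lemma energy_growth_bound:
  fixes a b r L :: real
  assumes "0 \<le> L" "\<bar>r\<bar> \<le> L * \<bar>a\<bar>"
  shows "2 * a * b + 2 * b * (r - 3 * b) \<le> (1 + L) * (a\<^sup>2 + b\<^sup>2)"
proof -
  have ab: "2 * \<bar>a\<bar> * \<bar>b\<bar> \<le> a\<^sup>2 + b\<^sup>2"
    using sum_squares_ge_zero[of "\<bar>a\<bar> - \<bar>b\<bar>" 0] by (simp add: power2_eq_square algebra_simps)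
  have "2 * b * r \<le> 2 * \<bar>b\<bar> * \<bar>r\<bar>" by (simp add: abs_mult[symmetric])
  also have "\<dots> \<le> L * (2 * \<bar>a\<bar> * \<bar>b\<bar>)"
    using assms(2) mult_left_mono[OF assms(2), of "2 * \<bar>b\<bar>"] by (simp add: algebra_simps)
  also have "\<dots> \<le> L * (a\<^sup>2 + b\<^sup>2)" using ab assms(1) by (rule mult_left_mono)
  finally have "2 * b * r \<le> L * (a\<^sup>2 + b\<^sup>2)" .
  moreover have "2 * a * b \<le> 2 * \<bar>a\<bar> * \<bar>b\<bar>" by (simp add: abs_mult[symmetric])
  moreover have "2 * a * b + 2 * b * (r - 3 * b) = 2 * a * b + 2 * b * r - 6 * b\<^sup>2"
    "(1 + L) * (a\<^sup>2 + b\<^sup>2) = a\<^sup>2 + b\<^sup>2 + L * (a\<^sup>2 + b\<^sup>2)"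
    by (simp_all add: algebra_simps power2_eq_square)
  ultimately show ?thesis using ab zero_le_power2[of b] by linarith
qed

lemma damped_sol_energy_estimate:
  assumes F: "L-lipschitz_on UNIV F"
    and s1: "damped_sol F m1 n1 f1 g1" and s2: "damped_sol F m2 n2 f2 g2" and t: "0 \<le> t"
  shows "(f1 t - f2 t)\<^sup>2 + (g1 t - g2 t)\<^sup>2 \<le> exp ((1 + L) * t) * ((m1 - m2)\<^sup>2 + (n1 - n2)\<^sup>2)"
proof -
  define E where "E x = (f1 x - f2 x)\<^sup>2 + (g1 x - g2 x)\<^sup>2" for x
  have "exp (- (1 + L) * t) * E t \<le> exp (- (1 + L) * 0) * E 0"
  proof (rule DERIV_nonpos_imp_decreasing_open[OF t])
    fix x :: real assume x: "0 < x" "x < t"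
    define a b r where "a = f1 x - f2 x" and "b = g1 x - g2 x" and "r = F (f1 x) - F (f2 x)"
    have "((\<lambda>x. exp (- (1 + L) * x) * E x) has_real_derivative
        exp (- (1 + L) * x) * (2 * a * b + 2 * b * (r - 3 * b) - (1 + L) * (a\<^sup>2 + b\<^sup>2))) (at x)"
      unfolding E_def a_def b_def r_def using x
      by (auto intro!: derivative_eq_intros damped_sol_has_derivative[OF s1]
          damped_sol_has_derivative[OF s2] damped_sol_deriv_has_derivative[OF s1]
          damped_sol_deriv_has_derivative[OF s2] simp: algebra_simps power2_eq_square)
    moreover have "\<bar>r\<bar> \<le> L * \<bar>a\<bar>"
      using lipschitz_onD[OF F, of "f1 x" "f2 x"] by (simp add: a_def r_def dist_real_def)
    then have "2 * a * b + 2 * b * (r - 3 * b) - (1 + L) * (a\<^sup>2 + b\<^sup>2) \<le> 0"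
      using energy_growth_bound[OF lipschitz_on_nonneg[OF F]] by simp
    ultimately show "\<exists>y. ((\<lambda>x. exp (- (1 + L) * x) * E x) has_real_derivative y) (at x) \<and> y \<le> 0"
      by (intro exI conjI) (auto intro: mult_nonneg_nonpos)
  next
    show "continuous_on {0..t} (\<lambda>x. exp (- (1 + L) * x) * E x)"
      unfolding E_def using s1 s2
      by (auto intro!: continuous_intros
          intro: continuous_on_subset[OF damped_sol_continuous_on]
            continuous_on_subset[OF damped_sol_deriv_continuous_on])
  qed
  moreover have "E 0 = (m1 - m2)\<^sup>2 + (n1 - n2)\<^sup>2"
    using s1 s2 by (simp add: E_def damped_sol_def)
  ultimately have "exp ((1 + L) * t) * (exp (- (1 + L) * t) * E t) \<le> exp ((1 + L) * t) * ((m1 - m2)\<^sup>2 + (n1 - n2)\<^sup>2)"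
    by (intro mult_left_mono) simp_all
  then show ?thesis by (simp add: E_def mult.assoc[symmetric] algebra_simps flip: exp_add)
qed

lemma damped_sol_dependence_on_slope:
  assumes F: "L-lipschitz_on UNIV F"
    and s1: "damped_sol F m n1 f1 g1" and s2: "damped_sol F m n2 f2 g2" and t: "0 \<le> t"
  shows "\<bar>f1 t - f2 t\<bar> \<le> exp ((1 + L) * t / 2) * \<bar>n1 - n2\<bar>"
    and "\<bar>g1 t - g2 t\<bar> \<le> exp ((1 + L) * t / 2) * \<bar>n1 - n2\<bar>"
proof -
  have "exp ((1 + L) * t) = (exp ((1 + L) * t / 2))\<^sup>2"
    by (simp add: power2_eq_square flip: exp_add)
  then have bound: "(f1 t - f2 t)\<^sup>2 + (g1 t - g2 t)\<^sup>2 \<le> (exp ((1 + L) * t / 2) * \<bar>n1 - n2\<bar>)\<^sup>2"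
    using damped_sol_energy_estimate[OF F s1 s2 t] by (simp add: power_mult_distrib)
  have "\<bar>f1 t - f2 t\<bar>\<^sup>2 \<le> (exp ((1 + L) * t / 2) * \<bar>n1 - n2\<bar>)\<^sup>2"
    "\<bar>g1 t - g2 t\<bar>\<^sup>2 \<le> (exp ((1 + L) * t / 2) * \<bar>n1 - n2\<bar>)\<^sup>2"
    unfolding power2_abs using bound zero_le_power2[of "f1 t - f2 t"] zero_le_power2[of "g1 t - g2 t"]
    by linarith+
  then show "\<bar>f1 t - f2 t\<bar> \<le> exp ((1 + L) * t / 2) * \<bar>n1 - n2\<bar>"
    "\<bar>g1 t - g2 t\<bar> \<le> exp ((1 + L) * t / 2) * \<bar>n1 - n2\<bar>"
    by (auto intro: power2_le_imp_le)
qed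

section \<open>Existence by Picard iteration\<close>

text \<open>By variation of constants, \<open>duhamel h t = \<integral>\<^sub>0\<^sup>t (1 - exp (3 (s - t))) h s / 3 ds\<close> solves
  \<open>y'' + 3 y' = h\<close> with \<open>y 0 = y' 0 = 0\<close>.\<close>

definition duhamel :: "(real \<Rightarrow> real) \<Rightarrow> real \<Rightarrow> real" where
  "duhamel h t = (integral {0..t} h - exp (- 3 * t) * integral {0..t} (\<lambda>s. exp (3 * s) * h s)) / 3"

definition duhamel_deriv :: "(real \<Rightarrow> real) \<Rightarrow> real \<Rightarrow> real" where
  "duhamel_deriv h t = exp (- 3 * t) * integral {0..t} (\<lambda>s. exp (3 * s) * h s)"

lemma integral_from_zero_has_derivative:
  fixes h :: "real \<Rightarrow> real"
  assumes "continuous_on {0..} h" "0 \<le> t"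
  shows "((\<lambda>u. integral {0..u} h) has_real_derivative h t) (at t within {0..})"
proof -
  have "continuous_on {0..t + 1} h" using assms(1) by (rule continuous_on_subset) auto
  moreover have "at t within {0..t + 1} = at t within {0..}"
    by (rule at_within_nhd[of _ "{..<t + 1}"]) (use assms(2) in auto)
  ultimately show ?thesis using integral_has_real_derivative[of 0 "t + 1" h t] assms(2) by simp
qed

lemma duhamel_has_derivative:
  assumes "continuous_on {0..} h" "0 \<le> t"
  shows "(duhamel h has_real_derivative duhamel_deriv h t) (at t within {0..})"
proof -
  have "continuous_on {0..} (\<lambda>s. exp (3 * s) * h s)" using assms(1) by (intro continuous_intros)
  from integral_from_zero_has_derivative[OF this assms(2)] integral_from_zero_has_derivative[OF assms]
  show ?thesis unfolding duhamel_def[abs_def] duhamel_deriv_def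
    by (auto intro!: derivative_eq_intros simp: algebra_simps simp flip: exp_add)
qed

lemma duhamel_deriv_has_derivative:
  assumes "continuous_on {0..} h" "0 \<le> t"
  shows "(duhamel_deriv h has_real_derivative h t - 3 * duhamel_deriv h t) (at t within {0..})"
proof -
  have "continuous_on {0..} (\<lambda>s. exp (3 * s) * h s)" using assms(1) by (intro continuous_intros)
  from integral_from_zero_has_derivative[OF this assms(2)]
  show ?thesis unfolding duhamel_deriv_def[abs_def]
    by (auto intro!: derivative_eq_intros simp: algebra_simps simp flip: exp_add)
qed

lemma continuous_on_duhamel_deriv:
  "continuous_on {0..} h \<Longrightarrow> continuous_on {0..} (duhamel_deriv h)"
  by (rule DERIV_continuous_on[OF duhamel_deriv_has_derivative]) auto

definition picard :: "(real \<Rightarrow> real) \<Rightarrow> real \<Rightarrow> real \<Rightarrow> (real \<Rightarrow> real) \<Rightarrow> real \<Rightarrow> real" where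
  "picard F m n x t = m + n * (1 - exp (- 3 * t)) / 3 + duhamel (\<lambda>s. F (x s)) t"

lemma picard_has_derivative:
  assumes "continuous_on UNIV F" "continuous_on {0..} x" "0 \<le> t"
  shows "(picard F m n x has_real_derivative n * exp (- 3 * t) + duhamel_deriv (\<lambda>s. F (x s)) t)
    (at t within {0..})"
proof -
  have "continuous_on {0..} (\<lambda>s. F (x s))"
    using assms(1,2) by (rule continuous_on_compose2) auto
  from duhamel_has_derivative[OF this assms(3)] show ?thesis
    unfolding picard_def[abs_def] by (auto intro!: derivative_eq_intros)
qed

lemma continuous_on_picard:
  "continuous_on UNIV F \<Longrightarrow> continuous_on {0..} x \<Longrightarrow> continuous_on {0..} (picard F m n x)"
  by (rule DERIV_continuous_on[OF picard_has_derivative]) auto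

lemma damped_sol_of_fixed_point:
  assumes F: "continuous_on UNIV F" and x: "continuous_on {0..} x"
    and fixed: "\<And>t. 0 \<le> t \<Longrightarrow> x t = picard F m n x t"
  shows "damped_sol F m n x (\<lambda>t. n * exp (- 3 * t) + duhamel_deriv (\<lambda>s. F (x s)) t)"
proof -
  have Fx: "continuous_on {0..} (\<lambda>s. F (x s))"
    using F x by (rule continuous_on_compose2) auto
  have "x 0 = m" using fixed[of 0] by (simp add: picard_def duhamel_def)
  moreover have "(x has_real_derivative n * exp (- 3 * t) + duhamel_deriv (\<lambda>s. F (x s)) t)
      (at t within {0..})" if "0 \<le> t" for t
    using picard_has_derivative[OF F x that]
    by (rule has_field_derivative_transform_within[of _ _ _ _ 1]) (use that fixed in auto)
  moreover have "((\<lambda>t. n * exp (- 3 * t) + duhamel_deriv (\<lambda>s. F (x s)) t) has_real_derivative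
      F (x t) - 3 * (n * exp (- 3 * t) + duhamel_deriv (\<lambda>s. F (x s)) t)) (at t)" if "0 < t" for t
  proof -
    have "at t within {0..} = at t" using that by (intro at_within_interior) auto
    with duhamel_deriv_has_derivative[OF Fx, of t] that show ?thesis
      by (auto intro!: derivative_eq_intros simp: algebra_simps)
  qed
  ultimately show ?thesis
    unfolding damped_sol_def using continuous_on_duhamel_deriv[OF Fx]
    by (auto intro!: continuous_intros simp: duhamel_deriv_def)
qed

lemma integral_exp_growth_bound:
  fixes h :: "real \<Rightarrow> real"
  assumes h: "continuous_on {0..t} h" and t: "0 \<le> t" and lam: "0 < lam"
    and growth: "\<And>s. s \<in> {0..t} \<Longrightarrow> \<bar>h s\<bar> \<le> b * exp (lam * s)"
  shows "\<bar>integral {0..t} h\<bar> \<le> b * exp (lam * t) / lam"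
proof -
  have exp_int: "((\<lambda>s. b * exp (lam * s)) has_integral (b * exp (lam * t) / lam - b / lam)) {0..t}"
  proof (rule fundamental_theorem_of_calculus[OF t, of "\<lambda>s. b * exp (lam * s) / lam", simplified])
    fix s
    show "((\<lambda>s. b * exp (lam * s) / lam) has_vector_derivative b * exp (lam * s)) (at s within {0..t})"
      using lam by (auto intro!: derivative_eq_intros simp flip: has_real_derivative_iff_has_vector_derivative)
  qed
  have "norm (integral {0..t} h) \<le> integral {0..t} (\<lambda>s. b * exp (lam * s))"
    using exp_int growth h
    by (intro integral_norm_bound_integral) (auto intro: has_integral_integrable integrable_continuous_interval)
  also have "\<dots> = b * exp (lam * t) / lam - b / lam"
    using exp_int by (rule integral_unique)
  moreover have "0 \<le> b / lam" using growth[of 0] t lam by auto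
  ultimately show ?thesis by simp
qed

lemma duhamel_bound:
  fixes h :: "real \<Rightarrow> real"
  assumes h: "continuous_on {0..t} h" and t: "0 \<le> t" and lam: "0 < lam"
    and growth: "\<And>s. s \<in> {0..t} \<Longrightarrow> \<bar>h s\<bar> \<le> b * exp (lam * s)"
  shows "\<bar>duhamel h t\<bar> \<le> 2 / 3 * b * exp (lam * t) / lam"
proof -
  have "\<bar>integral {0..t} (\<lambda>s. exp (3 * s) * h s)\<bar> \<le> (exp (3 * t) * b) * exp (lam * t) / lam"
  proof (rule integral_exp_growth_bound[OF _ t lam])
    show "continuous_on {0..t} (\<lambda>s. exp (3 * s) * h s)" using h by (intro continuous_intros)
  next
    fix s assume s: "s \<in> {0..t}"
    have "\<bar>exp (3 * s) * h s\<bar> \<le> exp (3 * t) * (b * exp (lam * s))"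
      using s growth[OF s] by (auto simp: abs_mult intro!: mult_mono)
    then show "\<bar>exp (3 * s) * h s\<bar> \<le> exp (3 * t) * b * exp (lam * s)" by (simp add: mult.assoc)
  qed
  then have "\<bar>exp (- 3 * t) * integral {0..t} (\<lambda>s. exp (3 * s) * h s)\<bar> \<le> b * exp (lam * t) / lam"
    by (simp add: abs_mult exp_minus field_simps)
  moreover have "\<bar>integral {0..t} h\<bar> \<le> b * exp (lam * t) / lam"
    by (rule integral_exp_growth_bound[OF h t lam growth])
  ultimately show ?thesis unfolding duhamel_def by (auto simp: abs_le_iff)
qed

lemma duhamel_diff:
  assumes "continuous_on {0..t} h1" "continuous_on {0..t} h2"
  shows "duhamel h1 t - duhamel h2 t = duhamel (\<lambda>s. h1 s - h2 s) t"
proof -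
  have linear: "integral {0..t} (\<lambda>s. h1 s - h2 s) = integral {0..t} h1 - integral {0..t} h2"
    "integral {0..t} (\<lambda>s. exp (3 * s) * (h1 s - h2 s))
      = integral {0..t} (\<lambda>s. exp (3 * s) * h1 s) - integral {0..t} (\<lambda>s. exp (3 * s) * h2 s)"
    using assms by (auto simp: right_diff_distrib intro!: integral_diff integrable_continuous_interval
        continuous_intros)
  show ?thesis unfolding duhamel_def linear by (simp add: algebra_simps diff_divide_distrib)
qed

lemma abs_picard_le:
  assumes Fx: "continuous_on {0..t} (\<lambda>s. F (x s))" and t: "0 \<le> t" and lam: "0 < lam"
    and growth: "\<And>s. s \<in> {0..t} \<Longrightarrow> \<bar>F (x s)\<bar> \<le> C * exp (lam * s)"
  shows "\<bar>picard F m n x t\<bar> \<le> \<bar>m\<bar> + \<bar>n\<bar> + 2 / 3 * C * exp (lam * t) / lam"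
proof -
  define e where "e = exp (- 3 * t)"
  have "0 < e" "e \<le> 1" using t by (auto simp: e_def)
  then have "\<bar>1 - e\<bar> / 3 \<le> 1" by (simp add: abs_le_iff)
  from mult_left_mono[OF this abs_ge_zero[of n]] have "\<bar>n * (1 - exp (- 3 * t)) / 3\<bar> \<le> \<bar>n\<bar>"
    by (simp add: abs_mult e_def)
  moreover have "\<bar>duhamel (\<lambda>s. F (x s)) t\<bar> \<le> 2 / 3 * C * exp (lam * t) / lam"
    by (rule duhamel_bound[OF Fx t lam growth])
  ultimately show ?thesis unfolding picard_def by linarith
qed

text \<open>Bielecki's weighted norm: \<open>z\<close> stands for \<open>x s = exp ((L + 1) s) z s\<close>, and in these coordinates
  the Picard map has Lipschitz constant \<open>2 L / (3 (L + 1)) < 2 / 3\<close> for the sup norm. Negative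
  times are sent to \<open>0\<close> so that the result is a bounded continuous function on all of \<open>\<real>\<close>.\<close>

definition weighted_picard ::
  "(real \<Rightarrow> real) \<Rightarrow> real \<Rightarrow> real \<Rightarrow> real \<Rightarrow> (real \<Rightarrow>\<^sub>C real) \<Rightarrow> real \<Rightarrow> real" where
  "weighted_picard F L m n z t =
     exp (- (L + 1) * max t 0) * picard F m n (\<lambda>s. exp ((L + 1) * s) * z s) (max t 0)"

lemma weighted_picard_bcontfun:
  assumes F: "L-lipschitz_on UNIV F"
  shows "weighted_picard F L m n z \<in> bcontfun"
proof -
  define lam where "lam = L + 1"
  define x where "x s = exp (lam * s) * z s" for s
  define C where "C = \<bar>F 0\<bar> + L * norm z"
  have L: "0 \<le> L" by (rule lipschitz_on_nonneg[OF F])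
  have Fc: "continuous_on UNIV F" by (rule lipschitz_on_continuous_on[OF F])
  have xc: "continuous_on {0..} x" unfolding x_def by (intro continuous_intros) auto
  have growth: "\<bar>F (x s)\<bar> \<le> C * exp (lam * s)" if "0 \<le> s" for s
  proof -
    have "\<bar>F (x s)\<bar> \<le> \<bar>F 0\<bar> + L * \<bar>x s\<bar>"
      using lipschitz_onD[OF F, of "x s" 0] by (simp add: dist_real_def)
    also have "\<dots> \<le> \<bar>F 0\<bar> * exp (lam * s) + L * (norm z * exp (lam * s))"
      using that L norm_bounded[of z s] unfolding x_def
      by (intro add_mono mult_left_mono) (auto simp: abs_mult lam_def mult_le_cancel_left1)
    finally show ?thesis by (simp add: C_def algebra_simps)
  qed
  show ?thesis
  proof (rule bcontfun_normI)
    have "continuous_on UNIV (\<lambda>t. picard F m n x (max t 0))"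
      by (rule continuous_on_compose2[OF continuous_on_picard[OF Fc xc]]) (auto intro!: continuous_intros)
    then show "continuous_on UNIV (weighted_picard F L m n z)"
      unfolding weighted_picard_def x_def[symmetric] lam_def[symmetric] by (intro continuous_intros)
  next
    fix t :: real
    define tt where "tt = max t 0"
    have tt: "0 \<le> tt" by (simp add: tt_def)
    have "\<bar>picard F m n x tt\<bar> \<le> \<bar>m\<bar> + \<bar>n\<bar> + 2 / 3 * C * exp (lam * tt) / lam"
      using growth tt L continuous_on_compose2[OF Fc xc]
      by (intro abs_picard_le) (auto simp: lam_def elim: continuous_on_subset)
    then have "exp (- lam * tt) * \<bar>picard F m n x tt\<bar>
        \<le> exp (- lam * tt) * (\<bar>m\<bar> + \<bar>n\<bar>) + 2 / 3 * C / lam"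
      by (auto simp: algebra_simps simp flip: exp_add dest: mult_left_mono[of _ _ "exp (- lam * tt)"])
    also have "\<dots> \<le> \<bar>m\<bar> + \<bar>n\<bar> + C"
    proof -
      have "0 \<le> lam * tt" using L tt by (simp add: lam_def)
      then have "exp (- lam * tt) * (\<bar>m\<bar> + \<bar>n\<bar>) \<le> \<bar>m\<bar> + \<bar>n\<bar>"
        by (intro mult_left_le_one_le) auto
      moreover have "2 / 3 * C / lam \<le> C" using L by (simp add: C_def lam_def field_simps)
      ultimately show ?thesis by linarith
    qed
    finally show "norm (weighted_picard F L m n z t) \<le> \<bar>m\<bar> + \<bar>n\<bar> + C"
      by (simp add: weighted_picard_def tt_def[symmetric] x_def[symmetric] lam_def[symmetric] abs_mult)
  qed
qed

lemma weighted_picard_dist: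
  assumes F: "L-lipschitz_on UNIV F"
  shows "\<bar>weighted_picard F L m n z1 t - weighted_picard F L m n z2 t\<bar> \<le> 2 / 3 * dist z1 z2"
proof -
  define lam where "lam = L + 1"
  define x1 x2 where "x1 s = exp (lam * s) * z1 s" and "x2 s = exp (lam * s) * z2 s" for s
  define tt where "tt = max t 0"
  have tt: "0 \<le> tt" by (simp add: tt_def)
  have L: "0 \<le> L" by (rule lipschitz_on_nonneg[OF F])
  have Fc: "continuous_on UNIV F" by (rule lipschitz_on_continuous_on[OF F])
  have c1: "continuous_on {0..tt} (\<lambda>s. F (x1 s))" and c2: "continuous_on {0..tt} (\<lambda>s. F (x2 s))"
    unfolding x1_def x2_def by (auto intro!: continuous_on_compose2[OF Fc] continuous_intros)
  have growth: "\<bar>F (x1 s) - F (x2 s)\<bar> \<le> (L * dist z1 z2) * exp (lam * s)" for s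
  proof -
    have "\<bar>x1 s - x2 s\<bar> = exp (lam * s) * dist (z1 s) (z2 s)"
      by (simp add: x1_def x2_def dist_real_def abs_mult flip: right_diff_distrib)
    also have "\<dots> \<le> exp (lam * s) * dist z1 z2" by (simp add: dist_bounded)
    finally have "L * \<bar>x1 s - x2 s\<bar> \<le> L * (exp (lam * s) * dist z1 z2)"
      using L by (rule mult_left_mono)
    moreover have "\<bar>F (x1 s) - F (x2 s)\<bar> \<le> L * \<bar>x1 s - x2 s\<bar>"
      using lipschitz_onD[OF F, of "x1 s" "x2 s"] by (simp add: dist_real_def)
    ultimately show ?thesis by (simp add: algebra_simps)
  qed
  have bound: "\<bar>duhamel (\<lambda>s. F (x1 s) - F (x2 s)) tt\<bar> \<le> 2 / 3 * (L * dist z1 z2) * exp (lam * tt) / lam"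
    by (rule duhamel_bound[OF _ tt _ growth]) (use c1 c2 L in \<open>auto intro: continuous_intros simp: lam_def\<close>)
  have "weighted_picard F L m n z1 t - weighted_picard F L m n z2 t
      = exp (- lam * tt) * duhamel (\<lambda>s. F (x1 s) - F (x2 s)) tt"
    using duhamel_diff[OF c1 c2]
    by (simp add: weighted_picard_def picard_def lam_def x1_def x2_def tt_def algebra_simps)
  then have "\<bar>weighted_picard F L m n z1 t - weighted_picard F L m n z2 t\<bar>
      = exp (- lam * tt) * \<bar>duhamel (\<lambda>s. F (x1 s) - F (x2 s)) tt\<bar>"
    by (simp add: abs_mult)
  also have "\<dots> \<le> exp (- lam * tt) * (2 / 3 * (L * dist z1 z2) * exp (lam * tt) / lam)"
    by (rule mult_left_mono[OF bound]) simp
  also have "\<dots> = 2 / 3 * dist z1 z2 * (L / (L + 1))"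
    by (simp add: lam_def field_simps flip: exp_add)
  also have "\<dots> \<le> 2 / 3 * dist z1 z2" using L by (intro mult_left_le) auto
  finally show ?thesis .
qed

lemma damped_sol_exists:
  assumes F: "L-lipschitz_on UNIV F"
  shows "\<exists>f f'. damped_sol F m n f f'"
proof -
  define P where "P z = Bcontfun (weighted_picard F L m n z)" for z
  have P: "P z t = weighted_picard F L m n z t" for z t
    unfolding P_def using Bcontfun_inverse[OF weighted_picard_bcontfun[OF F]] by simp
  have "dist (P z1) (P z2) \<le> 2 / 3 * dist z1 z2" for z1 z2
    unfolding dist_real_def[symmetric] by (rule dist_bound) (unfold P dist_real_def, rule weighted_picard_dist[OF F])
  then have "\<exists>!z. P z = z" by (intro banach_fix_type[of "2 / 3"]) auto
  then obtain z where z: "P z = z" by blast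
  define x where "x s = exp ((L + 1) * s) * z s" for s
  have "x t = picard F m n x t" if "0 \<le> t" for t
  proof -
    have "z t = exp (- (L + 1) * t) * picard F m n x t"
      using P[of z t] that by (simp add: z weighted_picard_def x_def[abs_def])
    moreover have "exp ((L + 1) * t) * exp (- (L + 1) * t) = 1" by (simp add: algebra_simps flip: exp_add)
    ultimately show ?thesis by (simp add: x_def mult.assoc[symmetric])
  qed
  moreover have "continuous_on {0..} x" unfolding x_def by (intro continuous_intros) auto
  ultimately show ?thesis
    using damped_sol_of_fixed_point[OF lipschitz_on_continuous_on[OF F]] by blast
qed

section \<open>Positivity and lower bounds\<close>

lemma first_nonpos_point:
  fixes g :: "real \<Rightarrow> real"
  assumes g: "continuous_on {a..b} g" and "0 < g a" "a \<le> b" "g b \<le> 0"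
  obtains c where "a < c" "c \<le> b" "g c \<le> 0" "\<And>x. a \<le> x \<Longrightarrow> x < c \<Longrightarrow> 0 < g x"
proof -
  define S where "S = {x \<in> {a..b}. g x \<le> 0}"
  have "S \<noteq> {}" using assms unfolding S_def by auto
  moreover have "bdd_below S" unfolding S_def by (rule bdd_belowI[of _ a]) auto
  moreover have "closed S" unfolding S_def
    by (rule continuous_on_closed_Collect_le[OF g]) (auto intro: continuous_intros)
  ultimately have "Inf S \<in> S" by (rule closed_contains_Inf)
  then have c: "a \<le> Inf S" "Inf S \<le> b" "g (Inf S) \<le> 0" unfolding S_def by auto
  have "0 < g x" if "a \<le> x" "x < Inf S" for x
  proof (rule ccontr)
    assume "\<not> 0 < g x"
    with that c have "x \<in> S" unfolding S_def by simp
    then have "Inf S \<le> x" using \<open>bdd_below S\<close> by (rule cInf_lower)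
    with that show False by simp
  qed
  moreover have "a < Inf S" using c \<open>0 < g a\<close> by (cases "a = Inf S") auto
  ultimately show thesis using c that by blast
qed

lemma damped_sol_deriv_stays_positive:
  assumes s: "damped_sol F m n f f'" and t0: "0 \<le> t0" "a \<le> f t0" "0 < f' t0" and t: "t0 \<le> t"
    and F_pos: "\<And>v. a < v \<Longrightarrow> 0 < F v"
  shows "0 < f' t"
proof (rule ccontr)
  assume "\<not> 0 < f' t"
  then have "f' t \<le> 0" by simp
  moreover have "continuous_on {t0..t} f'"
    using damped_sol_deriv_continuous_on[OF s] by (rule continuous_on_subset) (use t0 in auto)
  ultimately obtain t1 where t1: "t0 < t1" "t1 \<le> t" "f' t1 \<le> 0"
    and before_t1: "\<And>x. t0 \<le> x \<Longrightarrow> x < t1 \<Longrightarrow> 0 < f' x"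
    using first_nonpos_point[of t0 t f'] t0(3) t by metis
  text \<open>On \<open>[t0, t1]\<close> the solution increases, so \<open>f'' t1 = F (f t1) - 3 f' t1 > 0\<close>, which
    contradicts \<open>f' > 0\<close> just before its zero \<open>t1\<close>.\<close>
  have "f t0 < f t1"
  proof (rule DERIV_pos_imp_increasing_open[OF \<open>t0 < t1\<close>])
    fix x assume "t0 < x" "x < t1"
    then show "\<exists>y. (f has_real_derivative y) (at x) \<and> 0 < y"
      using damped_sol_has_derivative[OF s, of x] before_t1[of x] t0 by auto
  next
    show "continuous_on {t0..t1} f"
      using damped_sol_continuous_on[OF s] by (rule continuous_on_subset) (use t0 in auto)
  qed
  then have "0 < F (f t1) - 3 * f' t1" using F_pos[of "f t1"] t0(2) t1(3) by simp
  moreover have "0 < t1" using t1(1) t0(1) by simp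
  ultimately obtain d where d: "0 < d" "\<And>h. 0 < h \<Longrightarrow> h < d \<Longrightarrow> f' (t1 - h) < f' t1"
    using DERIV_pos_inc_left[OF damped_sol_deriv_has_derivative[OF s]] by blast
  define h where "h = min (d / 2) (t1 - t0)"
  have "0 < h" "h < d" "t0 \<le> t1 - h" "t1 - h < t1" using d(1) t1(1) by (auto simp: h_def)
  then show False using d(2)[of h] before_t1[of "t1 - h"] t1(3) by simp
qed

lemma damped_sol_deriv_lower_bound:
  assumes s: "damped_sol F m n f f'" and F_ge: "\<And>v. - c \<le> F v" and t: "0 \<le> t"
  shows "(n + c / 3) * exp (- 3 * t) - c / 3 \<le> f' t"
proof -
  define k where "k x = exp (3 * x) * (f' x + c / 3)" for x
  have "k 0 \<le> k t"
  proof (rule DERIV_nonneg_imp_increasing_open[OF t])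
    fix x :: real assume x: "0 < x" "x < t"
    have "(k has_real_derivative exp (3 * x) * (F (f x) + c)) (at x)"
      unfolding k_def using x
      by (auto intro!: derivative_eq_intros damped_sol_deriv_has_derivative[OF s] simp: algebra_simps)
    moreover have "0 \<le> exp (3 * x) * (F (f x) + c)" using F_ge[of "f x"] by simp
    ultimately show "\<exists>y. (k has_real_derivative y) (at x) \<and> 0 \<le> y" by blast
  next
    have "continuous_on {0..t} f'"
      using damped_sol_deriv_continuous_on[OF s] by (rule continuous_on_subset) auto
    then show "continuous_on {0..t} k" unfolding k_def by (intro continuous_intros)
  qed
  moreover have "k 0 = n + c / 3" using s by (simp add: k_def damped_sol_def)
  ultimately have "exp (- 3 * t) * (n + c / 3) \<le> exp (- 3 * t) * k t" by simp
  also have "\<dots> = f' t + c / 3"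
    using exp_add[of "- 3 * t" "3 * t"] by (simp add: k_def mult.assoc[symmetric])
  finally show ?thesis by (simp add: algebra_simps)
qed

lemma damped_sol_lower_bound:
  assumes s: "damped_sol F m n f f'" and F_ge: "\<And>v. - c \<le> F v" and t: "0 \<le> t"
  shows "m + (n + c / 3) * (1 - exp (- 3 * t)) / 3 - c / 3 * t \<le> f t"
proof -
  define q where "q x = f x - (n + c / 3) * (1 - exp (- 3 * x)) / 3 + c / 3 * x" for x
  have "q 0 \<le> q t"
  proof (rule DERIV_nonneg_imp_increasing_open[OF t])
    fix x :: real assume x: "0 < x" "x < t"
    have "(q has_real_derivative f' x - ((n + c / 3) * exp (- 3 * x) - c / 3)) (at x)"
      unfolding q_def using x
      by (auto intro!: derivative_eq_intros damped_sol_has_derivative[OF s] simp: algebra_simps)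
    moreover have "0 \<le> f' x - ((n + c / 3) * exp (- 3 * x) - c / 3)"
      using damped_sol_deriv_lower_bound[OF s F_ge, of x] x by simp
    ultimately show "\<exists>y. (q has_real_derivative y) (at x) \<and> 0 \<le> y" by blast
  next
    have "continuous_on {0..t} f"
      using damped_sol_continuous_on[OF s] by (rule continuous_on_subset) auto
    then show "continuous_on {0..t} q" unfolding q_def by (intro continuous_intros) auto
  qed
  moreover have "q 0 = m" using s by (simp add: q_def damped_sol_def)
  ultimately show ?thesis by (simp add: q_def)
qed

section \<open>The sets \<open>\<beta>\<^sup>+\<close> and \<open>\<beta>\<^sup>-\<close>\<close>

lemma damped_sol_Vsol: "damped_sol R m n (Vsol m n) (Vt m n)"
proof -
  obtain f f' where "damped_sol R m n f f'" using damped_sol_exists[OF R_lipschitz] by blast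
  then have "is_sol m n (fst (f, f')) (snd (f, f'))" by (simp add: is_sol_iff_damped_sol)
  then have "is_sol m n (fst (solpair m n)) (snd (solpair m n))" unfolding solpair_def by (rule someI)
  then show ?thesis by (simp add: is_sol_iff_damped_sol Vsol_def[abs_def] Vt_def[abs_def])
qed

lemma Vsol_Vt_close:
  assumes t: "0 \<le> t" "t \<le> T" and close: "\<bar>n1 - n2\<bar> < e / exp (5 * T / 2)"
  shows "\<bar>Vsol m n1 t - Vsol m n2 t\<bar> < e" "\<bar>Vt m n1 t - Vt m n2 t\<bar> < e"
proof -
  have "exp (5 * t / 2) * \<bar>n1 - n2\<bar> \<le> exp (5 * T / 2) * \<bar>n1 - n2\<bar>"
    using t by (intro mult_right_mono) auto
  also have "\<dots> < e" using close by (simp add: field_simps)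
  finally have "exp ((1 + 4) * t / 2) * \<bar>n1 - n2\<bar> < e" by simp
  then show "\<bar>Vsol m n1 t - Vsol m n2 t\<bar> < e" "\<bar>Vt m n1 t - Vt m n2 t\<bar> < e"
    using damped_sol_dependence_on_slope[OF R_lipschitz damped_sol_Vsol damped_sol_Vsol t(1)]
    by (meson le_less_trans)+
qed

lemma negative_slope_in_beta_minus:
  assumes "n < 0"
  shows "n \<in> beta_minus m"
proof -
  have "continuous_on {0..} (Vt m n)" by (rule damped_sol_deriv_continuous_on[OF damped_sol_Vsol])
  then obtain d where "0 < d" and d: "\<And>t. t \<in> {0..} \<Longrightarrow> dist t 0 < d \<Longrightarrow> dist (Vt m n t) (Vt m n 0) < - n"
    using assms unfolding continuous_on_iff by (metis atLeast_iff neg_0_less_iff_less order_refl)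
  have "Vt m n 0 = n" using damped_sol_Vsol by (simp add: damped_sol_def)
  with d[of "d / 2"] \<open>0 < d\<close> have "Vt m n (d / 2) < 0" by (simp add: dist_real_def)
  with \<open>0 < d\<close> show ?thesis unfolding beta_minus_def by (intro CollectI exI[of _ "d / 2"]) simp
qed

lemma open_beta_minus: "open (beta_minus m)"
  unfolding open_dist
proof
  fix n0 assume "n0 \<in> beta_minus m"
  then obtain t where t: "0 < t" "Vt m n0 t < 0" unfolding beta_minus_def by auto
  show "\<exists>r>0. \<forall>n. dist n n0 < r \<longrightarrow> n \<in> beta_minus m"
  proof (intro exI conjI allI impI)
    show "0 < - Vt m n0 t / exp (5 * t / 2)" using t by (simp add: divide_neg_pos)
  next
    fix n assume "dist n n0 < - Vt m n0 t / exp (5 * t / 2)"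
    then have "\<bar>Vt m n t - Vt m n0 t\<bar> < - Vt m n0 t"
      using t by (intro Vsol_Vt_close) (auto simp: dist_real_def)
    with t show "n \<in> beta_minus m" unfolding beta_minus_def by auto
  qed
qed

lemma beta_plusI:
  assumes t1: "0 < t1" "-1 < Vsol m n t1" and pos: "\<And>t. 0 \<le> t \<Longrightarrow> t \<le> t1 \<Longrightarrow> 0 < Vt m n t"
  shows "n \<in> beta_plus m"
proof -
  have "0 < Vt m n t" if "0 \<le> t" for t
  proof (cases "t \<le> t1")
    case True
    then show ?thesis using pos that by blast
  next
    case False
    have "0 \<le> t1" "- 1 \<le> Vsol m n t1" "0 < Vt m n t1" "t1 \<le> t"
      using t1 pos[of t1] False by simp_all
    then show ?thesis by (rule damped_sol_deriv_stays_positive[OF damped_sol_Vsol]) (rule R_pos)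
  qed
  with t1 show ?thesis unfolding beta_plus_def by auto
qed

lemma large_slope_in_beta_plus:
  assumes n: "exp 3 + 6 * \<bar>m\<bar> \<le> n"
  shows "n \<in> beta_plus m"
proof (rule beta_plusI)
  have e3: "4 \<le> exp (3::real)" using exp_ge_add_one_self[of 3] by simp
  have "exp (- 3) \<le> (1 / 2 :: real)" using e3 by (simp add: exp_minus field_simps)
  then have "(n + 2 / 3) * (1 / 2) \<le> (n + 2 / 3) * (1 - exp (- 3))"
    using n e3 by (intro mult_left_mono) linarith+
  moreover have "m + (n + 2 / 3) * (1 - exp (- 3)) / 3 - 2 / 3 \<le> Vsol m n 1"
    using damped_sol_lower_bound[OF damped_sol_Vsol R_ge, of 1] by simp
  ultimately have "m + n / 6 - 5 / 9 \<le> Vsol m n 1" by simp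
  then show "-1 < Vsol m n 1" using n e3 abs_ge_minus_self[of m] by linarith
next
  fix t :: real assume t: "0 \<le> t" "t \<le> 1"
  have "exp (- 3) \<le> exp (- 3 * t)" using t by simp
  moreover have "exp (3::real) \<le> n + 2 / 3" using n by linarith
  ultimately have "exp (- 3) * exp 3 \<le> exp (- 3 * t) * (n + 2 / 3)"
    by (rule mult_mono) simp_all
  then have "1 \<le> (n + 2 / 3) * exp (- 3 * t)" by (simp add: mult.commute flip: exp_add)
  then show "0 < Vt m n t"
    using damped_sol_deriv_lower_bound[OF damped_sol_Vsol[of m n] R_ge t(1)] by linarith
qed simp

lemma open_beta_plus: "open (beta_plus m)"
  unfolding open_dist
proof
  fix n0 assume "n0 \<in> beta_plus m"
  then obtain t1 where pos: "\<And>t. 0 \<le> t \<Longrightarrow> 0 < Vt m n0 t" and t1: "0 < t1" "-1 < Vsol m n0 t1"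
    unfolding beta_plus_def by auto
  have "continuous_on {0..t1} (Vt m n0)"
    using damped_sol_deriv_continuous_on[OF damped_sol_Vsol] by (rule continuous_on_subset) auto
  then have "\<exists>s0\<in>{0..t1}. \<forall>t\<in>{0..t1}. Vt m n0 s0 \<le> Vt m n0 t"
    by (intro continuous_attains_inf[OF compact_Icc]) (use t1 in auto)
  then obtain s0 where s0: "s0 \<in> {0..t1}" "\<And>t. t \<in> {0..t1} \<Longrightarrow> Vt m n0 s0 \<le> Vt m n0 t"
    by blast
  define e where "e = min (Vt m n0 s0) (Vsol m n0 t1 + 1)"
  have e: "0 < e" using pos s0 t1 by (auto simp: e_def)
  show "\<exists>r>0. \<forall>n. dist n n0 < r \<longrightarrow> n \<in> beta_plus m"
  proof (intro exI conjI allI impI)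
    show "0 < e / exp (5 * t1 / 2)" using e by simp
  next
    fix n assume "dist n n0 < e / exp (5 * t1 / 2)"
    then have near: "\<bar>n - n0\<bar> < e / exp (5 * t1 / 2)" by (simp add: dist_real_def)
    show "n \<in> beta_plus m"
    proof (rule beta_plusI[OF t1(1)])
      show "-1 < Vsol m n t1"
        using Vsol_Vt_close(1)[where m = m, OF _ order_refl near] t1 by (auto simp: e_def)
    next
      fix t assume t: "0 \<le> t" "t \<le> t1"
      have "e \<le> Vt m n0 t" using s0(2)[of t] t by (simp add: e_def min.coboundedI1)
      moreover have "\<bar>Vt m n t - Vt m n0 t\<bar> < e" using Vsol_Vt_close(2)[OF t near] .
      ultimately show "0 < Vt m n t" by linarith
    qed
  qed
qed

theorem lemma4p2:
  fixes m :: real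
  assumes "m < -1"
  shows "open (beta_plus m) \<and> beta_plus m \<noteq> {} \<and> open (beta_minus m) \<and> beta_minus m \<noteq> {}"
  using open_beta_plus large_slope_in_beta_plus[of m "exp 3 + 6 * \<bar>m\<bar>"]
    open_beta_minus negative_slope_in_beta_minus[of "-1" m]
  by auto

end
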